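(* Let $\tilde A,\tilde B\in\mathbb{R}^{m\times n}$, fix $(l,k)\in\{1,\dots,m\}\times\{1,\dots,n\}$, and define $\bar A=\tilde A-\mathbf{1}_m\tilde A_{(l)}-(\tilde A^{(k)}-\tilde a_{l,k}\mathbf{1}_m)\mathbf{1}_n^\mathsf{T}$, $\bar B=\tilde B-\mathbf{1}_m\tilde B_{(l)}-(\tilde B^{(k)}-\tilde b_{l,k}\mathbf{1}_m)\mathbf{1}_n^\mathsf{T}$, $\hat A(\gamma)=\tilde A-(\mathbf{1}_m\tilde A_{(l)}+\gamma\mathbf{1}_m\tilde B_{(l)})$, $\hat B(\gamma)=\gamma\tilde B-\big((\tilde A^{(k)}-\tilde a_{l,k}\mathbf{1}_m)\mathbf{1}_n^\mathsf{T}+\gamma(\tilde B^{(k)}-\tilde b_{l,k}\mathbf{1}_m)\mathbf{1}_n^\mathsf{T}\big)$. Construct a set $\Lambda\subseteq\mathbb{C}$ as follows. If $\operatorname{rank}(\bar A+\bar B)=1$, let $\Lambda=\{1\}$. Otherwise, assuming $\bar A\neq0$ and $\bar B\ne0$, choose $(i,j)$ with $\bar a_{i,j}\neq0$; if $\bar b_{i,j}\neq0$ and $\operatorname{rank}(\bar A-\frac{\bar a_{i,j}}{\bar b_{i,j}}\bar B)=1$, let $\Lambda=\{-\bar a_{i,j}/\bar b_{i,j}\}$; otherwise let $\Lambda$ be the set of those $\hat\lambda\in\mathbb{C}$ with $\bar a_{i,j}+\hat\lambda\bar b_{i,j}\ne0$, $f_{s,t}(i,j;\hat\lambda)=0$ and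 $\bar A+\hat\lambda\bar B=\mathbf{r}_j(\hat\lambda)\mathbf{c}_i(\hat\lambda)^\mathsf{T}$, where $(s,t)$ is any pair for which $f_{s,t}(i,j;\lambda)$ is not identically zero, and $\mathbf{r}_j,\mathbf{c}_i,f_{s,t}$ are formed from $\bar A,\bar B$. If some $\lambda\in\Lambda$ is a positive real number and $\gamma^*$ is such a $\lambda$, then $(m,n,\tilde A,\tilde B)$ is strategically equivalent to the rank-1 game $(m,n,\hat A(\gamma^* ),\hat B(\gamma^* ))$.
   Context: $\mathbf{1}_k$ is the all-ones vector. For a matrix $M$, $M_{(i)}$ is its $i$-th row, $M^{(j)}$ its $j$-th column, $m_{i,j}$ its $(i,j)$ entry. For matrices $A,B$ and a pivot $(i,j)$ with $a_{i,j}\neq0$: $\mathbf{r}_j(\lambda)=A^{(j)}+\lambda B^{(j)}$, $\mathbf{c}_i(\lambda)^\mathsf{T}=\frac{1}{a_{i,j}+\lambda b_{i,j}}(A_{(i)}+\lambda B_{(i)})$, and $f_{s,t}(i,j;\lambda)=a_{s,t}+\lambda b_{s,t}-\frac{(a_{s,j}+\lambda b_{s,j})(a_{i,t}+\lambda b_{i,t})}{a_{i,j}+\lambda b_{i,j}}$. A bimatrix game $(m,n,A,B)$ has payoff matrices $A,B$; two games are strategically equivalent iff they have the same set of (mixed) Nash equilibria; a game is rank-1 if $\operatorname{rank}(A+B)=1$. *)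

theory Defs
  imports "HOL-Analysis.Analysis"
begin

text \<open>Bimatrix games with m rows and n columns; the dimensions are the finite
  index types 'm and 'n.  Matrices are real^'n^'m (A $ i $ j is entry (i,j)).\<close>

definition mixed_strategy :: "real^'k \<Rightarrow> bool" where
  "mixed_strategy x \<longleftrightarrow> (\<forall>i. x $ i \<ge> 0) \<and> (\<Sum>i\<in>UNIV. x $ i) = 1"

definition payoff :: "real^'n^'m \<Rightarrow> real^'m \<Rightarrow> real^'n \<Rightarrow> real" where
  "payoff M x y = (\<Sum>i\<in>UNIV. \<Sum>j\<in>UNIV. x $ i * M $ i $ j * y $ j)"

definition nash_equilibria :: "real^'n^'m \<Rightarrow> real^'n^'m \<Rightarrow> ((real^'m) \<times> (real^'n)) set" where
  "nash_equilibria A B = {(x, y). mixed_strategy x \<and> mixed_strategy y \<and>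
      (\<forall>x'. mixed_strategy x' \<longrightarrow> payoff A x' y \<le> payoff A x y) \<and>
      (\<forall>y'. mixed_strategy y' \<longrightarrow> payoff B x y' \<le> payoff B x y)}"

definition strategically_equivalent ::
  "real^'n^'m \<Rightarrow> real^'n^'m \<Rightarrow> real^'n^'m \<Rightarrow> real^'n^'m \<Rightarrow> bool" where
  "strategically_equivalent A B A' B' \<longleftrightarrow> nash_equilibria A B = nash_equilibria A' B'"

definition rank_one_game :: "real^'n^'m \<Rightarrow> real^'n^'m \<Rightarrow> bool" where
  "rank_one_game A B \<longleftrightarrow> rank (A + B) = 1"

definition Mbar :: "real^'n^'m \<Rightarrow> 'm \<Rightarrow> 'n \<Rightarrow> real^'n^'m" where
  "Mbar M l k = (\<chi> i j. M $ i $ j - M $ l $ j - (M $ i $ k - M $ l $ k))"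

definition Ahat :: "real^'n^'m \<Rightarrow> real^'n^'m \<Rightarrow> 'm \<Rightarrow> real \<Rightarrow> real^'n^'m" where
  "Ahat A B l \<gamma> = (\<chi> i j. A $ i $ j - (A $ l $ j + \<gamma> * B $ l $ j))"

definition Bhat :: "real^'n^'m \<Rightarrow> real^'n^'m \<Rightarrow> 'm \<Rightarrow> 'n \<Rightarrow> real \<Rightarrow> real^'n^'m" where
  "Bhat A B l k \<gamma> = (\<chi> i j. \<gamma> * B $ i $ j
      - ((A $ i $ k - A $ l $ k) + \<gamma> * (B $ i $ k - B $ l $ k)))"

definition pen :: "real^'n^'m \<Rightarrow> real^'n^'m \<Rightarrow> complex \<Rightarrow> 'm \<Rightarrow> 'n \<Rightarrow> complex" where
  "pen A B z s t = complex_of_real (A $ s $ t) + z * complex_of_real (B $ s $ t)"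

definition r_col :: "real^'n^'m \<Rightarrow> real^'n^'m \<Rightarrow> 'n \<Rightarrow> complex \<Rightarrow> complex^'m" where
  "r_col A B j z = (\<chi> s. pen A B z s j)"

definition c_row :: "real^'n^'m \<Rightarrow> real^'n^'m \<Rightarrow> 'm \<Rightarrow> 'n \<Rightarrow> complex \<Rightarrow> complex^'n" where
  "c_row A B i j z = (\<chi> t. pen A B z i t / pen A B z i j)"

definition f_st :: "real^'n^'m \<Rightarrow> real^'n^'m \<Rightarrow> 'm \<Rightarrow> 'n \<Rightarrow> 'm \<Rightarrow> 'n \<Rightarrow> complex \<Rightarrow> complex" where
  "f_st A B s t i j z = pen A B z s t - pen A B z s j * pen A B z i t / pen A B z i j"

definition f_identically_zero ::
  "real^'n^'m \<Rightarrow> real^'n^'m \<Rightarrow> 'm \<Rightarrow> 'n \<Rightarrow> 'm \<Rightarrow> 'n \<Rightarrow> bool" where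
  "f_identically_zero A B s t i j \<longleftrightarrow>
     (\<forall>z. pen A B z i j \<noteq> 0 \<longrightarrow> f_st A B s t i j z = 0)"

definition Lambda_set ::
  "real^'n^'m \<Rightarrow> real^'n^'m \<Rightarrow> 'm \<Rightarrow> 'n \<Rightarrow> 'm \<Rightarrow> 'n \<Rightarrow> complex set" where
  "Lambda_set Ab Bb i j s t =
    (if rank (Ab + Bb) = 1 then {1}
     else if Bb $ i $ j \<noteq> 0 \<and> rank (Ab - (Ab $ i $ j / Bb $ i $ j) *\<^sub>R Bb) = 1
       then {complex_of_real (- (Ab $ i $ j / Bb $ i $ j))}
     else {z. pen Ab Bb z i j \<noteq> 0 \<and> f_st Ab Bb s t i j z = 0 \<and>
              (\<forall>p q. pen Ab Bb z p q = r_col Ab Bb j z $ p * c_row Ab Bb i j z $ q)})"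

end

theory Submission
  imports Defs
begin

text \<open>Subtracting from the row player's payoffs a quantity depending only on the column,
  and from the column player's payoffs one depending only on the row, does not change
  either player's best responses; neither does a positive rescaling. Hence
  \<open>\<hat>A(\<gamma>), \<hat>B(\<gamma>)\<close> is strategically equivalent to \<open>\<tilde>A, \<tilde>B\<close> for every \<open>\<gamma> > 0\<close>.
  Moreover \<open>\<hat>A(\<gamma>) + \<hat>B(\<gamma>) = \<bar>A + \<gamma>\<bar>B\<close>, and every real point of \<open>\<Lambda>\<close> makes
  this pencil rank one: in the third case of the construction the factorisation
  \<open>\<bar>A + \<lambda>\<bar>B = r\<^sub>j(\<lambda>) c\<^sub>i(\<lambda>)\<^sup>T\<close> says that all \<open>2\<times>2\<close> minors through the nonzero
  pivot \<open>(i,j)\<close> vanish.\<close>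

lemma payoff_scale_minus_column_shift:
  assumes "mixed_strategy x"
  shows "payoff (\<chi> i j. c * M $ i $ j - u j) x y = c * payoff M x y - (\<Sum>j\<in>UNIV. u j * y $ j)"
proof -
  have "payoff (\<chi> i j. c * M $ i $ j - u j) x y
      = c * payoff M x y - (\<Sum>i\<in>UNIV. x $ i) * (\<Sum>j\<in>UNIV. u j * y $ j)"
    unfolding payoff_def
    by (simp add: algebra_simps sum_subtractf sum_distrib_left sum_distrib_right) (rule sum.swap)
  with assms show ?thesis
    by (simp add: mixed_strategy_def)
qed

lemma payoff_scale_minus_row_shift:
  assumes "mixed_strategy y"
  shows "payoff (\<chi> i j. d * M $ i $ j - v i) x y = d * payoff M x y - (\<Sum>i\<in>UNIV. x $ i * v i)"
proof -
  have "payoff (\<chi> i j. d * M $ i $ j - v i) x y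
      = d * payoff M x y - (\<Sum>i\<in>UNIV. x $ i * v i) * (\<Sum>j\<in>UNIV. y $ j)"
    unfolding payoff_def
    by (simp add: algebra_simps sum_subtractf sum_distrib_left sum_distrib_right)
  with assms show ?thesis
    by (simp add: mixed_strategy_def)
qed

lemma nash_equilibria_scale_minus_shifts:
  assumes "c > 0" and "d > 0"
  shows "nash_equilibria (\<chi> i j. c * A $ i $ j - u j) (\<chi> i j. d * B $ i $ j - v i)
       = nash_equilibria A B"
  using assms
  by (auto simp: nash_equilibria_def payoff_scale_minus_column_shift payoff_scale_minus_row_shift)

lemma rank_eq_1_if_minors_through_pivot_vanish:
  fixes M :: "real^'n^'m"
  assumes pivot: "M $ i $ j \<noteq> 0"
    and minors: "\<And>p q. M $ p $ q * M $ i $ j = M $ p $ j * M $ i $ q"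
  shows "rank M = 1"
proof -
  have "rank M \<noteq> 0"
    using pivot by (auto simp: rank_eq_0)
  have "rows M \<subseteq> span {row i M}"
  proof
    fix r assume "r \<in> rows M"
    then obtain p where r: "r = row p M"
      by (auto simp: rows_def)
    have "r = (M $ p $ j / M $ i $ j) *\<^sub>R row i M"
      unfolding r row_def using pivot minors
      by (simp add: vec_eq_iff field_simps) (metis mult.commute)
    then show "r \<in> span {row i M}"
      by (simp add: span_base span_mul)
  qed
  then have "dim (rows M) \<le> dim (span {row i M})"
    by (rule dim_subset)
  also have "\<dots> \<le> 1"
    by (simp add: dim_span dim_le_card')
  finally have "rank M \<le> 1"
    by (simp add: row_rank_def)
  with \<open>rank M \<noteq> 0\<close> show ?thesis
    by linarith
qed

lemma pen_minors_vanish_if_factorizes: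
  assumes "pen A B z i j \<noteq> 0"
    and "pen A B z p q = r_col A B j z $ p * c_row A B i j z $ q"
  shows "pen A B z p q * pen A B z i j = pen A B z p j * pen A B z i q"
  using assms by (simp add: r_col_def c_row_def field_simps)

lemma pen_of_real: "pen A B (complex_of_real \<gamma>) p q = complex_of_real ((A + \<gamma> *\<^sub>R B) $ p $ q)"
  by (simp add: pen_def)

lemma rank_pencil_eq_1_if_in_Lambda_set:
  assumes "complex_of_real \<gamma> \<in> Lambda_set A B i j s t"
  shows "rank (A + \<gamma> *\<^sub>R B) = 1"
proof (cases "rank (A + B) = 1")
  case True
  with assms show ?thesis
    by (simp add: Lambda_set_def)
next
  case not_rank1: False
  show ?thesis
  proof (cases "B $ i $ j \<noteq> 0 \<and> rank (A - (A $ i $ j / B $ i $ j) *\<^sub>R B) = 1")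
    case True
    with assms not_rank1 have "complex_of_real \<gamma> = complex_of_real (- (A $ i $ j / B $ i $ j))"
      by (simp add: Lambda_set_def)
    then have "\<gamma> = - (A $ i $ j / B $ i $ j)"
      by (simp only: of_real_eq_iff)
    with True show ?thesis
      by simp
  next
    case False
    let ?z = "complex_of_real \<gamma>" and ?M = "A + \<gamma> *\<^sub>R B"
    from assms not_rank1 False have pivot: "pen A B ?z i j \<noteq> 0"
      and factor: "\<And>p q. pen A B ?z p q = r_col A B j ?z $ p * c_row A B i j ?z $ q"
      by (auto simp: Lambda_set_def)
    show ?thesis
    proof (rule rank_eq_1_if_minors_through_pivot_vanish)
      show "?M $ i $ j \<noteq> 0"
        using pivot unfolding pen_of_real by (metis of_real_0)
      fix p q
      show "?M $ p $ q * ?M $ i $ j = ?M $ p $ j * ?M $ i $ q"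
        using pen_minors_vanish_if_factorizes[OF pivot factor]
        by (simp only: pen_of_real of_real_mult [symmetric] of_real_eq_iff)
    qed
  qed
qed

lemma Ahat_plus_Bhat: "Ahat A B l \<gamma> + Bhat A B l k \<gamma> = Mbar A l k + \<gamma> *\<^sub>R Mbar B l k"
  by (simp add: Ahat_def Bhat_def Mbar_def vec_eq_iff algebra_simps)

theorem mainTheorem8:
  fixes At Bt :: "real^'n^'m" and l :: 'm and k :: 'n
    and i :: 'm and j :: 'n and s :: 'm and t :: 'n and \<gamma> :: real
  assumes nonrank1:
      "rank (Mbar At l k + Mbar Bt l k) \<noteq> 1 \<Longrightarrow>
         Mbar At l k \<noteq> 0 \<and> Mbar Bt l k \<noteq> 0 \<and> Mbar At l k $ i $ j \<noteq> 0"
    and st_choice: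
      "\<lbrakk>rank (Mbar At l k + Mbar Bt l k) \<noteq> 1;
        \<not> (Mbar Bt l k $ i $ j \<noteq> 0 \<and>
           rank (Mbar At l k - (Mbar At l k $ i $ j / Mbar Bt l k $ i $ j) *\<^sub>R Mbar Bt l k) = 1)\<rbrakk>
       \<Longrightarrow> \<not> f_identically_zero (Mbar At l k) (Mbar Bt l k) s t i j"
    and in_Lambda: "complex_of_real \<gamma> \<in> Lambda_set (Mbar At l k) (Mbar Bt l k) i j s t"
    and pos: "\<gamma> > 0"
  shows "strategically_equivalent At Bt (Ahat At Bt l \<gamma>) (Bhat At Bt l k \<gamma>)
         \<and> rank_one_game (Ahat At Bt l \<gamma>) (Bhat At Bt l k \<gamma>)"
proof
  have "nash_equilibria (Ahat At Bt l \<gamma>) (Bhat At Bt l k \<gamma>) = nash_equilibria At Bt"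
    using nash_equilibria_scale_minus_shifts[of 1 \<gamma> At "\<lambda>j. At $ l $ j + \<gamma> * Bt $ l $ j"
        Bt "\<lambda>i. (At $ i $ k - At $ l $ k) + \<gamma> * (Bt $ i $ k - Bt $ l $ k)"] pos
    by (simp add: Ahat_def Bhat_def)
  then show "strategically_equivalent At Bt (Ahat At Bt l \<gamma>) (Bhat At Bt l k \<gamma>)"
    by (simp add: strategically_equivalent_def)
  show "rank_one_game (Ahat At Bt l \<gamma>) (Bhat At Bt l k \<gamma>)"
    using rank_pencil_eq_1_if_in_Lambda_set[OF in_Lambda]
    by (simp add: rank_one_game_def Ahat_plus_Bhat)
qed

end
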